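(* Let $\mathbf S=\langle S,+,0,\mathscr F\rangle$ be a semilattice with operators. For $\theta\in\operatorname{Con}\mathbf S$ with $0$-class $I$, let $\eta(\theta)$ be the semilattice congruence generated by $I$ (so $x\,\eta(\theta)\,y$ iff $x+i=y+i$ for some $i\in I$) and let $\tau(\theta)$ be the relation with $x\,\tau(\theta)\,y$ iff for all $h\in\mathscr F^\dagger$, $h(x)\in I\Leftrightarrow h(y)\in I$. Then the lattice $\operatorname{Con}\mathbf S$ is partitioned into the intervals $[\eta(\theta),\tau(\theta)]$, each such interval consisting of exactly the congruences having the same $0$-class (which is an $\mathscr F$-closed ideal) as $\theta$.
   Context: A semilattice with operators is a join semilattice $(S,+)$ with least element $0$ together with a set $\mathscr F$ of unary maps preserving $+$ and $0$; congruences are equivalence relations compatible with $+$ and all $f\in\mathscr F$. $\mathscr F^\dagger$ denotes the monoid generated by $\mathscr F$ under composition, including the identity map. *)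

theory Defs
  imports Main
begin

definition sl_ops :: "'a set \<Rightarrow> ('a \<Rightarrow> 'a \<Rightarrow> 'a) \<Rightarrow> 'a \<Rightarrow> ('a \<Rightarrow> 'a) set \<Rightarrow> bool" where
  "sl_ops S join zero F \<longleftrightarrow>
     zero \<in> S \<and>
     (\<forall>x\<in>S. \<forall>y\<in>S. join x y \<in> S) \<and>
     (\<forall>x\<in>S. \<forall>y\<in>S. \<forall>z\<in>S. join (join x y) z = join x (join y z)) \<and>
     (\<forall>x\<in>S. \<forall>y\<in>S. join x y = join y x) \<and>
     (\<forall>x\<in>S. join x x = x) \<and>
     (\<forall>x\<in>S. join x zero = x) \<and>
     (\<forall>f\<in>F. (\<forall>x\<in>S. f x \<in> S) \<and> f zero = zero \<and>
        (\<forall>x\<in>S. \<forall>y\<in>S. f (join x y) = join (f x) (f y)))"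

inductive_set Fdag :: "('a \<Rightarrow> 'a) set \<Rightarrow> ('a \<Rightarrow> 'a) set" for F where
  Fdag_id: "id \<in> Fdag F"
| Fdag_comp: "f \<in> F \<Longrightarrow> h \<in> Fdag F \<Longrightarrow> f \<circ> h \<in> Fdag F"

definition Con :: "'a set \<Rightarrow> ('a \<Rightarrow> 'a \<Rightarrow> 'a) \<Rightarrow> ('a \<Rightarrow> 'a) set \<Rightarrow> 'a rel set" where
  "Con S join F = {\<theta>. equiv S \<theta> \<and>
     (\<forall>x y u v. (x, y) \<in> \<theta> \<longrightarrow> (u, v) \<in> \<theta> \<longrightarrow> (join x u, join y v) \<in> \<theta>) \<and>
     (\<forall>f\<in>F. \<forall>x y. (x, y) \<in> \<theta> \<longrightarrow> (f x, f y) \<in> \<theta>)}"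

definition zero_class :: "'a set \<Rightarrow> 'a \<Rightarrow> 'a rel \<Rightarrow> 'a set" where
  "zero_class S zero \<theta> = {x \<in> S. (x, zero) \<in> \<theta>}"

definition sl_ideal :: "'a set \<Rightarrow> ('a \<Rightarrow> 'a \<Rightarrow> 'a) \<Rightarrow> 'a set \<Rightarrow> bool" where
  "sl_ideal S join I \<longleftrightarrow> I \<subseteq> S \<and> I \<noteq> {} \<and>
     (\<forall>x\<in>I. \<forall>y\<in>I. join x y \<in> I) \<and>
     (\<forall>x\<in>S. \<forall>y\<in>I. join x y = y \<longrightarrow> x \<in> I)"

definition F_closed :: "('a \<Rightarrow> 'a) set \<Rightarrow> 'a set \<Rightarrow> bool" where
  "F_closed F I \<longleftrightarrow> (\<forall>f\<in>F. \<forall>x\<in>I. f x \<in> I)"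

definition eta :: "'a set \<Rightarrow> ('a \<Rightarrow> 'a \<Rightarrow> 'a) \<Rightarrow> 'a \<Rightarrow> 'a rel \<Rightarrow> 'a rel" where
  "eta S join zero \<theta> =
     {(x, y). x \<in> S \<and> y \<in> S \<and> (\<exists>i \<in> zero_class S zero \<theta>. join x i = join y i)}"

definition tau :: "'a set \<Rightarrow> 'a \<Rightarrow> ('a \<Rightarrow> 'a) set \<Rightarrow> 'a rel \<Rightarrow> 'a rel" where
  "tau S zero F \<theta> =
     {(x, y). x \<in> S \<and> y \<in> S \<and>
        (\<forall>h \<in> Fdag F. h x \<in> zero_class S zero \<theta> \<longleftrightarrow> h y \<in> zero_class S zero \<theta>)}"

end

theory Submission
  imports Defs
begin

text \<open>The 0-class \<open>I\<close> of a congruence satisfies \<open>a + b \<in> I \<longleftrightarrow> a \<in> I \<and> b \<in> I\<close>, since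
  \<open>a = a + 0 \<equiv> a + (a + b) = a + b \<equiv> 0\<close>. This makes \<open>\<tau>(\<theta>)\<close> compatible with \<open>+\<close>, and
  closing the indices of \<open>\<tau>\<close> under \<open>\<F>\<^sup>\<dagger>\<close> makes it compatible with the operators; \<open>\<eta>(\<theta>)\<close>
  is a congruence because \<open>I\<close> is an \<open>\<F>\<close>-closed ideal. Both \<open>\<eta>(\<theta>)\<close> and \<open>\<tau>(\<theta>)\<close> depend on
  \<open>\<theta>\<close> only through \<open>I\<close>, lie below resp. above \<open>\<theta>\<close>, and have 0-class \<open>I\<close>. As the 0-class is
  monotone in the congruence, the congruences in \<open>[\<eta>(\<theta>), \<tau>(\<theta>)]\<close> are exactly those with
  0-class \<open>I\<close>, so the intervals partition \<open>Con S\<close>.\<close>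

lemma Fdag_comp_right:
  assumes "h \<in> Fdag F" and "f \<in> F"
  shows "h \<circ> f \<in> Fdag F"
  using assms(1)
proof induction
  case Fdag_id
  show ?case using Fdag.Fdag_comp[OF assms(2) Fdag.Fdag_id] by simp
next
  case (Fdag_comp g h)
  then show ?case
    using Fdag.Fdag_comp[of g F "h \<circ> f"] by (simp add: comp_assoc del: comp_apply)
qed

lemma Con_subset: "\<theta> \<in> Con S join F \<Longrightarrow> (x, y) \<in> \<theta> \<Longrightarrow> x \<in> S \<and> y \<in> S"
  unfolding Con_def equiv_def refl_on_def by blast

lemma Con_refl: "\<theta> \<in> Con S join F \<Longrightarrow> x \<in> S \<Longrightarrow> (x, x) \<in> \<theta>"
  unfolding Con_def equiv_def refl_on_def by blast

lemma Con_sym: "\<theta> \<in> Con S join F \<Longrightarrow> (x, y) \<in> \<theta> \<Longrightarrow> (y, x) \<in> \<theta>"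
  unfolding Con_def equiv_def sym_def by blast

lemma Con_trans: "\<theta> \<in> Con S join F \<Longrightarrow> (x, y) \<in> \<theta> \<Longrightarrow> (y, z) \<in> \<theta> \<Longrightarrow> (x, z) \<in> \<theta>"
  unfolding Con_def equiv_def trans_def by blast

lemma Con_join:
  "\<theta> \<in> Con S join F \<Longrightarrow> (x, y) \<in> \<theta> \<Longrightarrow> (u, v) \<in> \<theta> \<Longrightarrow> (join x u, join y v) \<in> \<theta>"
  unfolding Con_def by blast

lemma Con_op: "\<theta> \<in> Con S join F \<Longrightarrow> f \<in> F \<Longrightarrow> (x, y) \<in> \<theta> \<Longrightarrow> (f x, f y) \<in> \<theta>"
  unfolding Con_def by blast

lemma Con_Fdag:
  assumes "\<theta> \<in> Con S join F" and "h \<in> Fdag F" and "(x, y) \<in> \<theta>"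
  shows "(h x, h y) \<in> \<theta>"
  using assms(2,3) by (induction arbitrary: x y) (auto intro: Con_op[OF assms(1)])

lemma ConI:
  assumes "equiv S \<theta>"
    and "\<And>x y u v. (x, y) \<in> \<theta> \<Longrightarrow> (u, v) \<in> \<theta> \<Longrightarrow> (join x u, join y v) \<in> \<theta>"
    and "\<And>f x y. f \<in> F \<Longrightarrow> (x, y) \<in> \<theta> \<Longrightarrow> (f x, f y) \<in> \<theta>"
  shows "\<theta> \<in> Con S join F"
  using assms unfolding Con_def by blast

lemma zero_class_subset: "zero_class S zero \<theta> \<subseteq> S"
  unfolding zero_class_def by blast

lemma zero_class_mono: "\<theta> \<subseteq> \<psi> \<Longrightarrow> zero_class S zero \<theta> \<subseteq> zero_class S zero \<psi>"
  unfolding zero_class_def by blast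

lemma eta_cong_zero_class:
  "zero_class S zero \<psi> = zero_class S zero \<theta> \<Longrightarrow> eta S join zero \<psi> = eta S join zero \<theta>"
  unfolding eta_def by simp

lemma tau_cong_zero_class:
  "zero_class S zero \<psi> = zero_class S zero \<theta> \<Longrightarrow> tau S zero F \<psi> = tau S zero F \<theta>"
  unfolding tau_def by simp

locale semilattice_ops =
  fixes S :: "'a set" and join :: "'a \<Rightarrow> 'a \<Rightarrow> 'a" and zero :: 'a and F :: "('a \<Rightarrow> 'a) set"
  assumes sl_ops: "sl_ops S join zero F"
begin

lemma zero_in: "zero \<in> S"
  and join_closed: "x \<in> S \<Longrightarrow> y \<in> S \<Longrightarrow> join x y \<in> S"
  and join_assoc: "x \<in> S \<Longrightarrow> y \<in> S \<Longrightarrow> z \<in> S \<Longrightarrow> join (join x y) z = join x (join y z)"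
  and join_comm: "x \<in> S \<Longrightarrow> y \<in> S \<Longrightarrow> join x y = join y x"
  and join_idem: "x \<in> S \<Longrightarrow> join x x = x"
  and join_zero: "x \<in> S \<Longrightarrow> join x zero = x"
  and op_closed: "f \<in> F \<Longrightarrow> x \<in> S \<Longrightarrow> f x \<in> S"
  and op_zero: "f \<in> F \<Longrightarrow> f zero = zero"
  and op_join: "f \<in> F \<Longrightarrow> x \<in> S \<Longrightarrow> y \<in> S \<Longrightarrow> f (join x y) = join (f x) (f y)"
  using sl_ops unfolding sl_ops_def by blast+

lemma join_absorb: "x \<in> S \<Longrightarrow> y \<in> S \<Longrightarrow> join x (join x y) = join x y"
  by (metis join_assoc join_idem)

lemma Fdag_closed: "h \<in> Fdag F \<Longrightarrow> x \<in> S \<Longrightarrow> h x \<in> S"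
  by (induction rule: Fdag.induct) (auto intro: op_closed)

lemma Fdag_join: "h \<in> Fdag F \<Longrightarrow> x \<in> S \<Longrightarrow> y \<in> S \<Longrightarrow> h (join x y) = join (h x) (h y)"
  by (induction rule: Fdag.induct) (auto simp: op_join Fdag_closed)

context
  fixes \<theta> assumes \<theta>: "\<theta> \<in> Con S join F"
begin

lemma zero_in_zero_class: "zero \<in> zero_class S zero \<theta>"
  using Con_refl[OF \<theta> zero_in] zero_in unfolding zero_class_def by blast

lemma join_in_zero_class_iff:
  assumes a: "a \<in> S" and b: "b \<in> S"
  shows "join a b \<in> zero_class S zero \<theta> \<longleftrightarrow> a \<in> zero_class S zero \<theta> \<and> b \<in> zero_class S zero \<theta>"
proof
  assume "join a b \<in> zero_class S zero \<theta>"
  then have ab: "(join a b, zero) \<in> \<theta>" unfolding zero_class_def by blast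
  have below: "(c, zero) \<in> \<theta>" if c: "c \<in> S" and absorb: "join c (join a b) = join a b" for c
  proof -
    have "(join c zero, join c (join a b)) \<in> \<theta>"
      using Con_join[OF \<theta> Con_refl[OF \<theta> c] Con_sym[OF \<theta> ab]] .
    then show ?thesis using Con_trans[OF \<theta> _ ab] join_zero[OF c] absorb by simp
  qed
  have "join b (join a b) = join a b"
    using join_absorb[OF b a] join_comm[OF a b] by simp
  then show "a \<in> zero_class S zero \<theta> \<and> b \<in> zero_class S zero \<theta>"
    using below[OF a join_absorb[OF a b]] below[OF b] a b unfolding zero_class_def by blast
next
  assume "a \<in> zero_class S zero \<theta> \<and> b \<in> zero_class S zero \<theta>"
  then have "(join a b, join zero zero) \<in> \<theta>"
    using Con_join[OF \<theta>] unfolding zero_class_def by blast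
  then show "join a b \<in> zero_class S zero \<theta>"
    using join_idem[OF zero_in] join_closed[OF a b] unfolding zero_class_def by simp
qed

lemma zero_class_sl_ideal: "sl_ideal S join (zero_class S zero \<theta>)"
  unfolding sl_ideal_def
proof (intro conjI ballI impI)
  show "zero_class S zero \<theta> \<noteq> {}" using zero_in_zero_class by blast
  fix x y assume "x \<in> S" "y \<in> zero_class S zero \<theta>" "join x y = y"
  then show "x \<in> zero_class S zero \<theta>"
    using join_in_zero_class_iff zero_class_subset[of S zero \<theta>] by (metis subsetD)
qed (use zero_class_subset[of S zero \<theta>] join_in_zero_class_iff in blast)+

lemma zero_class_F_closed: "F_closed F (zero_class S zero \<theta>)"
  unfolding F_closed_def
proof (intro ballI)
  fix f x assume f: "f \<in> F" and x: "x \<in> zero_class S zero \<theta>"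
  then have "(f x, f zero) \<in> \<theta>" "x \<in> S"
    using Con_op[OF \<theta> f] unfolding zero_class_def by blast+
  then show "f x \<in> zero_class S zero \<theta>"
    using op_zero[OF f] op_closed[OF f] unfolding zero_class_def by simp
qed

lemma eta_in_Con: "eta S join zero \<theta> \<in> Con S join F"
proof (rule ConI)
  let ?I = "zero_class S zero \<theta>"
  have I_join: "join i j \<in> ?I" if "i \<in> ?I" "j \<in> ?I" for i j
    using that join_in_zero_class_iff zero_class_subset[of S zero \<theta>] by blast
  show "equiv S (eta S join zero \<theta>)"
  proof (rule equivI)
    show "eta S join zero \<theta> \<subseteq> S \<times> S"
      unfolding eta_def by blast
    show "refl_on S (eta S join zero \<theta>)"
      unfolding refl_on_def eta_def using zero_in_zero_class by blast
    show "sym (eta S join zero \<theta>)"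
      unfolding sym_def eta_def by (auto dest: sym)
    show "trans (eta S join zero \<theta>)"
    proof (rule transI)
      fix x y z assume "(x, y) \<in> eta S join zero \<theta>" "(y, z) \<in> eta S join zero \<theta>"
      then obtain i j where xyz: "x \<in> S" "y \<in> S" "z \<in> S" and i: "i \<in> ?I" "join x i = join y i"
        and j: "j \<in> ?I" "join y j = join z j" unfolding eta_def by blast
      have ij: "i \<in> S" "j \<in> S" using i(1) j(1) zero_class_subset[of S zero \<theta>] by blast+
      have "join x (join i j) = join (join y j) i"
        by (metis i(2) ij join_assoc join_comm join_closed xyz(1,2))
      also have "\<dots> = join z (join i j)"
        by (metis j(2) ij join_assoc join_comm xyz(3))
      finally show "(x, z) \<in> eta S join zero \<theta>"
        unfolding eta_def using xyz I_join[OF i(1) j(1)] by blast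
    qed
  qed
next
  let ?I = "zero_class S zero \<theta>"
  fix x y u v
  assume "(x, y) \<in> eta S join zero \<theta>" "(u, v) \<in> eta S join zero \<theta>"
  then obtain i j where S4: "x \<in> S" "y \<in> S" "u \<in> S" "v \<in> S" and i: "i \<in> ?I" "join x i = join y i"
    and j: "j \<in> ?I" "join u j = join v j" unfolding eta_def by blast
  have ij: "i \<in> S" "j \<in> S" using i(1) j(1) zero_class_subset[of S zero \<theta>] by blast+
  have shuffle: "join (join a c) (join i j) = join (join a i) (join c j)" if "a \<in> S" "c \<in> S" for a c
    by (metis that ij join_assoc join_comm join_closed)
  have "join (join x u) (join i j) = join (join y v) (join i j)"
    using shuffle[OF S4(1,3)] shuffle[OF S4(2,4)] i(2) j(2) by simp
  then show "(join x u, join y v) \<in> eta S join zero \<theta>"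
    unfolding eta_def using S4 join_closed join_in_zero_class_iff i(1) j(1) ij by blast
next
  let ?I = "zero_class S zero \<theta>"
  fix f x y assume f: "f \<in> F" and "(x, y) \<in> eta S join zero \<theta>"
  then obtain i where xy: "x \<in> S" "y \<in> S" and i: "i \<in> ?I" "join x i = join y i"
    unfolding eta_def by blast
  have "i \<in> S" using i(1) zero_class_subset[of S zero \<theta>] by blast
  then have "join (f x) (f i) = join (f y) (f i)"
    using i(2) op_join[OF f] xy by metis
  moreover have "f i \<in> ?I" using zero_class_F_closed f i(1) unfolding F_closed_def by blast
  ultimately show "(f x, f y) \<in> eta S join zero \<theta>"
    unfolding eta_def using op_closed[OF f] xy by blast
qed

lemma tau_in_Con: "tau S zero F \<theta> \<in> Con S join F"
proof (rule ConI)
  show "equiv S (tau S zero F \<theta>)"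
    by (rule equivI) (auto simp: refl_on_def sym_def trans_def tau_def)
next
  let ?I = "zero_class S zero \<theta>"
  fix x y u v assume xy: "(x, y) \<in> tau S zero F \<theta>" and uv: "(u, v) \<in> tau S zero F \<theta>"
  then have S4: "x \<in> S" "y \<in> S" "u \<in> S" "v \<in> S" unfolding tau_def by blast+
  have "h (join x u) \<in> ?I \<longleftrightarrow> h (join y v) \<in> ?I" if h: "h \<in> Fdag F" for h
  proof -
    have "h (join x u) \<in> ?I \<longleftrightarrow> h x \<in> ?I \<and> h u \<in> ?I"
      using Fdag_join[OF h] Fdag_closed[OF h] join_in_zero_class_iff S4 by simp
    also have "\<dots> \<longleftrightarrow> h y \<in> ?I \<and> h v \<in> ?I"
      using xy uv h unfolding tau_def by blast
    also have "\<dots> \<longleftrightarrow> h (join y v) \<in> ?I"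
      using Fdag_join[OF h] Fdag_closed[OF h] join_in_zero_class_iff S4 by simp
    finally show ?thesis .
  qed
  then show "(join x u, join y v) \<in> tau S zero F \<theta>"
    unfolding tau_def using S4 join_closed by blast
next
  fix f x y assume f: "f \<in> F" and xy: "(x, y) \<in> tau S zero F \<theta>"
  then show "(f x, f y) \<in> tau S zero F \<theta>"
    unfolding tau_def using Fdag_comp_right[OF _ f] op_closed[OF f] by fastforce
qed

lemma eta_subset: "eta S join zero \<theta> \<subseteq> \<theta>"
proof (rule subrelI)
  fix x y assume "(x, y) \<in> eta S join zero \<theta>"
  then obtain i where xy: "x \<in> S" "y \<in> S" and i: "(i, zero) \<in> \<theta>" "join x i = join y i"
    unfolding eta_def zero_class_def by blast
  have absorb: "(join a i, a) \<in> \<theta>" if "a \<in> S" for a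
    using Con_join[OF \<theta> Con_refl[OF \<theta> that] i(1)] join_zero[OF that] by simp
  show "(x, y) \<in> \<theta>"
    using Con_trans[OF \<theta> Con_sym[OF \<theta> absorb[OF xy(1)]]] absorb[OF xy(2)] i(2) by simp
qed

lemma subset_tau: "\<theta> \<subseteq> tau S zero F \<theta>"
proof (rule subrelI)
  fix x y assume xy: "(x, y) \<in> \<theta>"
  have "h x \<in> zero_class S zero \<theta> \<longleftrightarrow> h y \<in> zero_class S zero \<theta>" if "h \<in> Fdag F" for h
    using Con_Fdag[OF \<theta> that xy] Con_subset[OF \<theta>] Con_trans[OF \<theta>] Con_sym[OF \<theta>]
    unfolding zero_class_def by blast
  then show "(x, y) \<in> tau S zero F \<theta>"
    unfolding tau_def using Con_subset[OF \<theta> xy] by blast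
qed

lemma zero_class_eta: "zero_class S zero (eta S join zero \<theta>) = zero_class S zero \<theta>"
proof (rule equalityI)
  show "zero_class S zero (eta S join zero \<theta>) \<subseteq> zero_class S zero \<theta>"
    using zero_class_mono[OF eta_subset] .
  show "zero_class S zero \<theta> \<subseteq> zero_class S zero (eta S join zero \<theta>)"
  proof
    fix x assume x: "x \<in> zero_class S zero \<theta>"
    then have "x \<in> S" using zero_class_subset[of S zero \<theta>] by blast
    then have "join x x = join zero x"
      using join_idem join_comm[OF _ zero_in] join_zero by simp
    then show "x \<in> zero_class S zero (eta S join zero \<theta>)"
      using x \<open>x \<in> S\<close> zero_in unfolding eta_def zero_class_def by blast
  qed
qed

lemma zero_class_tau: "zero_class S zero (tau S zero F \<theta>) = zero_class S zero \<theta>"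
proof (rule equalityI)
  show "zero_class S zero (tau S zero F \<theta>) \<subseteq> zero_class S zero \<theta>"
    unfolding tau_def zero_class_def using Fdag_id[of F] zero_in_zero_class
    unfolding zero_class_def by auto
  show "zero_class S zero \<theta> \<subseteq> zero_class S zero (tau S zero F \<theta>)"
    using zero_class_mono[OF subset_tau] .
qed

lemma in_interval_iff_zero_class_eq:
  assumes \<psi>: "\<psi> \<in> Con S join F"
  shows "(eta S join zero \<theta> \<subseteq> \<psi> \<and> \<psi> \<subseteq> tau S zero F \<theta>) \<longleftrightarrow>
         zero_class S zero \<psi> = zero_class S zero \<theta>"
proof
  assume bounds: "eta S join zero \<theta> \<subseteq> \<psi> \<and> \<psi> \<subseteq> tau S zero F \<theta>"
  show "zero_class S zero \<psi> = zero_class S zero \<theta>"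
  proof (rule subset_antisym)
    show "zero_class S zero \<psi> \<subseteq> zero_class S zero \<theta>"
      using zero_class_mono[of \<psi> "tau S zero F \<theta>" S zero] bounds zero_class_tau by simp
    show "zero_class S zero \<theta> \<subseteq> zero_class S zero \<psi>"
      using zero_class_mono[of "eta S join zero \<theta>" \<psi> S zero] bounds zero_class_eta by simp
  qed
next
  assume same_class: "zero_class S zero \<psi> = zero_class S zero \<theta>"
  have "eta S join zero \<psi> \<subseteq> \<psi>" "\<psi> \<subseteq> tau S zero F \<psi>"
    using semilattice_ops.eta_subset[OF semilattice_ops_axioms \<psi>]
      semilattice_ops.subset_tau[OF semilattice_ops_axioms \<psi>] .
  then show "eta S join zero \<theta> \<subseteq> \<psi> \<and> \<psi> \<subseteq> tau S zero F \<theta>"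
    unfolding eta_cong_zero_class[OF same_class] tau_cong_zero_class[OF same_class] ..
qed

lemma interval_eq_same_zero_class:
  "{\<psi> \<in> Con S join F. eta S join zero \<theta> \<subseteq> \<psi> \<and> \<psi> \<subseteq> tau S zero F \<theta>} =
   {\<psi> \<in> Con S join F. zero_class S zero \<psi> = zero_class S zero \<theta>}"
  using in_interval_iff_zero_class_eq by blast

end

lemma intervals_eq_or_disjoint:
  assumes \<theta>: "\<theta> \<in> Con S join F" and \<theta>': "\<theta>' \<in> Con S join F"
  shows "(eta S join zero \<theta> = eta S join zero \<theta>' \<and> tau S zero F \<theta> = tau S zero F \<theta>')
    \<or> {\<psi> \<in> Con S join F. eta S join zero \<theta> \<subseteq> \<psi> \<and> \<psi> \<subseteq> tau S zero F \<theta>}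
      \<inter> {\<psi> \<in> Con S join F. eta S join zero \<theta>' \<subseteq> \<psi> \<and> \<psi> \<subseteq> tau S zero F \<theta>'} = {}"
proof (cases "zero_class S zero \<theta> = zero_class S zero \<theta>'")
  case True
  then show ?thesis
    using eta_cong_zero_class[of S zero \<theta> \<theta>' join] tau_cong_zero_class[of S zero \<theta> \<theta>' F] by simp
next
  case False
  then show ?thesis
    unfolding interval_eq_same_zero_class[OF \<theta>] interval_eq_same_zero_class[OF \<theta>']
    by (intro disjI2) auto
qed

end

theorem theorem5p2:
  fixes S :: "'a set" and join :: "'a \<Rightarrow> 'a \<Rightarrow> 'a" and zero :: 'a
    and F :: "('a \<Rightarrow> 'a) set"
  assumes "sl_ops S join zero F"
  shows "(\<forall>\<theta> \<in> Con S join F.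
            eta S join zero \<theta> \<in> Con S join F \<and> tau S zero F \<theta> \<in> Con S join F \<and>
            eta S join zero \<theta> \<subseteq> \<theta> \<and> \<theta> \<subseteq> tau S zero F \<theta> \<and>
            sl_ideal S join (zero_class S zero \<theta>) \<and> F_closed F (zero_class S zero \<theta>) \<and>
            (\<forall>\<psi> \<in> Con S join F.
               (eta S join zero \<theta> \<subseteq> \<psi> \<and> \<psi> \<subseteq> tau S zero F \<theta>) \<longleftrightarrow>
               zero_class S zero \<psi> = zero_class S zero \<theta>))
       \<and> (\<forall>\<theta> \<in> Con S join F. \<forall>\<theta>' \<in> Con S join F.
            (eta S join zero \<theta> = eta S join zero \<theta>' \<and> tau S zero F \<theta> = tau S zero F \<theta>')
            \<or> {\<psi> \<in> Con S join F. eta S join zero \<theta> \<subseteq> \<psi> \<and> \<psi> \<subseteq> tau S zero F \<theta>}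
              \<inter> {\<psi> \<in> Con S join F. eta S join zero \<theta>' \<subseteq> \<psi> \<and> \<psi> \<subseteq> tau S zero F \<theta>'} = {})"
proof -
  interpret semilattice_ops S join zero F by unfold_locales (rule assms)
  show ?thesis
    by (intro conjI ballI)
      (simp_all add: eta_in_Con tau_in_Con eta_subset subset_tau zero_class_sl_ideal
        zero_class_F_closed in_interval_iff_zero_class_eq intervals_eq_or_disjoint)
qed

end
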